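(* Let $s\in\mathbb{Z}$ and let $f$ be a $k$-face of $\square_{\alpha_s}$ with vertices $p_1,\ldots,p_{2^k}\in G_{\alpha_s}$. Then: (1) the set $\{g_{\alpha_s}(p_1),\ldots,g_{\alpha_s}(p_{2^k})\}$ is the vertex set of a face $e$ of $\square_{\alpha_{s+1}}$; (2) for every face $e_1\subseteq e$ there is a face $f_1\subseteq f$ with $g_{\alpha_s}(f_1)=e_1$; (3) if $e_1,e_2$ are two opposite facets of $e$, then there exists a pair of opposite facets $f_1,f_2$ of $f$ with $g_{\alpha_s}(f_1)=e_1$ and $g_{\alpha_s}(f_2)=e_2$.
   Context: Fix $d\ge 1$, $\lambda>0$ and scales $\alpha_s:=\lambda 2^s$, $s\in\mathbb{Z}$. The grids $(G_{\alpha_s})_{s\in\mathbb{Z}}$ satisfy $G_{\alpha_0}=\lambda\mathbb{Z}^d$ and, for every $s$, $G_{\alpha_{s+1}}=2(G_{\alpha_s}-O_s)+O_s+\frac{\alpha_s}{2}\varepsilon_s$ for some $O_s\in G_{\alpha_s}$ and sign vector $\varepsilon_s\in\{-1,+1\}^d$; so $G_{\alpha_s}$ is a translate of $\alpha_s\mathbb{Z}^d$. $\mathrm{Vor}_G(x)$ is the Voronoi cell of $x\in G$ w.r.t. $G$ (the closed axis-parallel cube of side $\alpha_s$ centered at $x$ for $G=G_{\alpha_s}$); each $x\in G_{\alpha_s}$ lies in $\mathrm{Vor}_{G_{\alpha_{s+1}}}(y)$ for a unique $y\in G_{\alpha_{s+1}}$. The cubical complex $\square_{\alpha_s}$ consists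 of the faces $\prod_{j=1}^d[x_j,x_j+m_j]$ with $(x_1,\dots,x_d)\in G_{\alpha_s}$ and each $m_j\in\{0,\alpha_s\}$; its dimension is the number of $j$ with $m_j\neq 0$, and its vertices are its points lying in $G_{\alpha_s}$ ($0$-faces are the grid points). A facet of a $k$-face $E$ is a $(k-1)$-face contained in $E$; two facets of $E$ are opposite if they are disjoint. The map $g_{\alpha_s}$ sends a vertex $x\in G_{\alpha_s}$ to the unique $y\in G_{\alpha_{s+1}}$ with $x\in\mathrm{Vor}_{G_{\alpha_{s+1}}}(y)$, and sends a face $f$ of $\square_{\alpha_s}$ to the convex hull of the images of its vertices. *)

theory Defs
  imports "HOL-Analysis.Analysis"
begin

definition scale :: "real \<Rightarrow> int \<Rightarrow> real" where
  "scale lam s = lam * (2 powi s)"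

definition int_lattice :: "real \<Rightarrow> (real^'n) set" where
  "int_lattice a = {x. \<forall>i. \<exists>k::int. x $ i = a * of_int k}"

definition Vor :: "(real^'n) set \<Rightarrow> real^'n \<Rightarrow> (real^'n) set" where
  "Vor G x = {y. \<forall>z\<in>G. dist y x \<le> dist y z}"

definition face_box :: "real^'n \<Rightarrow> real^'n \<Rightarrow> (real^'n) set" where
  "face_box x m = {y. \<forall>j. x $ j \<le> y $ j \<and> y $ j \<le> x $ j + m $ j}"

definition is_kface :: "(real^'n) set \<Rightarrow> real \<Rightarrow> nat \<Rightarrow> (real^'n) set \<Rightarrow> bool" where
  "is_kface G a k F \<longleftrightarrow> (\<exists>x m. x \<in> G \<and> (\<forall>j. m $ j \<in> {0, a}) \<and>
      card {j. m $ j \<noteq> 0} = k \<and> F = face_box x m)"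

definition is_face :: "(real^'n) set \<Rightarrow> real \<Rightarrow> (real^'n) set \<Rightarrow> bool" where
  "is_face G a F \<longleftrightarrow> (\<exists>k. is_kface G a k F)"

definition vertices :: "(real^'n) set \<Rightarrow> (real^'n) set \<Rightarrow> (real^'n) set" where
  "vertices G F = F \<inter> G"

definition is_facet :: "(real^'n) set \<Rightarrow> real \<Rightarrow> (real^'n) set \<Rightarrow> (real^'n) set \<Rightarrow> bool" where
  "is_facet G a E F \<longleftrightarrow> (\<exists>k. is_kface G a (Suc k) E \<and> is_kface G a k F \<and> F \<subseteq> E)"

definition gvert :: "(real^'n) set \<Rightarrow> real^'n \<Rightarrow> real^'n" where
  "gvert G' x = (THE y. y \<in> G' \<and> x \<in> Vor G' y)"

definition gface :: "(real^'n) set \<Rightarrow> (real^'n) set \<Rightarrow> (real^'n) set \<Rightarrow> (real^'n) set" where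
  "gface G G' F = convex hull (gvert G' ` vertices G F)"

end

theory Submission
  imports Defs
begin

text \<open>Both grids are products of one-dimensional lattices, and the coarse lattice is offset from the
  fine one by half a fine step. Hence every fine grid point has a unique nearest coarse grid point,
  obtained coordinatewise by moving \<open>a/2\<close> up or down, and \<open>g\<close> is a product of monotone maps that
  merge consecutive fine coordinates in pairs: in each coordinate, an edge \<open>[x, x + a]\<close> of the fine
  grid goes either to a single coarse coordinate or onto a coarse edge. So a fine face is mapped onto
  a coarse face, subfaces of the image can be pulled back one coordinate at a time, and two opposite
  facets of the image, which fix some coordinate \<open>j\<close> at its two ends, are the images of the two
  facets of \<open>f = [x, x + m]\<close> fixing coordinate \<open>j\<close> at \<open>x\<^sub>j\<close> and \<open>x\<^sub>j + a\<close>.\<close>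

section \<open>Boxes and their corners\<close>

definition vec_Pi :: "('n \<Rightarrow> real set) \<Rightarrow> (real^'n) set" where
  "vec_Pi S = {z. \<forall>j. z $ j \<in> S j}"

definition vec_upd :: "real^'n \<Rightarrow> 'n \<Rightarrow> real \<Rightarrow> real^'n" where
  "vec_upd x j t = (\<chi> i. if i = j then t else x $ i)"

lemma vec_upd_nth [simp]: "vec_upd x j t $ i = (if i = j then t else x $ i)"
  by (simp add: vec_upd_def)

lemma image_vec_Pi: "(\<lambda>z. \<chi> j. g j (z $ j)) ` vec_Pi S = vec_Pi (\<lambda>j. g j ` S j)"
proof
  show "vec_Pi (\<lambda>j. g j ` S j) \<subseteq> (\<lambda>z. \<chi> j. g j (z $ j)) ` vec_Pi S"
  proof
    fix y assume "y \<in> vec_Pi (\<lambda>j. g j ` S j)"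
    then obtain w where w: "\<forall>j. w j \<in> S j \<and> g j (w j) = y $ j"
      by (simp add: vec_Pi_def image_iff) metis
    then have "(\<chi> j. w j) \<in> vec_Pi S" and "y = (\<chi> j. g j (w j))"
      by (simp_all add: vec_Pi_def vec_eq_iff)
    then show "y \<in> (\<lambda>z. \<chi> j. g j (z $ j)) ` vec_Pi S"
      by (auto simp: image_iff intro!: bexI [of _ "\<chi> j. w j"])
  qed
qed (auto simp: vec_Pi_def)

lemma face_box_eq_vec_Pi: "face_box x m = vec_Pi (\<lambda>j. {x $ j .. x $ j + m $ j})"
  by (simp add: face_box_def vec_Pi_def)

lemma subset_face_box_iff:
  assumes "\<forall>j. m $ j \<ge> 0"
  shows "face_box x m \<subseteq> face_box y r \<longleftrightarrow> (\<forall>j. y $ j \<le> x $ j \<and> x $ j + m $ j \<le> y $ j + r $ j)"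
proof
  assume "face_box x m \<subseteq> face_box y r"
  moreover have "x \<in> face_box x m" "x + m \<in> face_box x m"
    using assms by (auto simp: face_box_def)
  ultimately have "x \<in> face_box y r" "x + m \<in> face_box y r" by blast+
  then show "\<forall>j. y $ j \<le> x $ j \<and> x $ j + m $ j \<le> y $ j + r $ j"
    by (auto simp: face_box_def)
qed (clarsimp simp: face_box_def subset_iff, meson order.trans add_left_mono)

lemma face_box_inject:
  assumes "\<forall>j. m $ j \<ge> 0" "\<forall>j. r $ j \<ge> 0" "face_box x m = face_box y r"
  shows "x = y" "m = r"
proof -
  have "x $ j = y $ j \<and> m $ j = r $ j" for j
    using assms subset_face_box_iff [OF assms(1), of x y r] subset_face_box_iff [OF assms(2), of y x m]
    by (metis add_le_cancel_left order.antisym order.refl)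
  then show "x = y" "m = r" by (simp_all add: vec_eq_iff)
qed

lemma convex_hull_unit_cube_vertices:
  "convex hull vec_Pi (\<lambda>_::'n::finite. {0, 1}) = vec_Pi (\<lambda>_::'n::finite. {0..1::real})"
proof -
  have "vec_Pi (\<lambda>_. {0..1}) = cbox (0::real^'n) One"
    by (auto simp: vec_Pi_def mem_box_cart simp flip: Cart_1)
  moreover have "vec_Pi (\<lambda>_. {0, 1}) = {x::real^'n. \<forall>i\<in>Basis. x \<bullet> i = 0 \<or> x \<bullet> i = 1}"
    by (auto simp: vec_Pi_def Basis_vec_def inner_axis)
  ultimately show ?thesis
    by (simp add: unit_interval_convex_hull)
qed

lemma convex_hull_face_box_vertices:
  fixes x m :: "real^'n"
  assumes "\<forall>j. m $ j \<ge> 0"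
  shows "convex hull vec_Pi (\<lambda>j. {x $ j, x $ j + m $ j}) = face_box x m"
proof -
  define T where "T = (\<lambda>z::real^'n. \<chi> j. m $ j * z $ j + x $ j)"
  define L where "L = (\<lambda>z::real^'n. \<chi> j. m $ j * z $ j)"
  have "linear L"
    by (auto simp: L_def linear_iff vec_eq_iff algebra_simps)
  have T: "T = (\<lambda>z. x + z) \<circ> L"
    by (auto simp: T_def L_def vec_eq_iff)
  have hull_T: "convex hull (T ` S) = T ` (convex hull S)" for S
  proof -
    have "convex hull (T ` S) = (\<lambda>z. x + z) ` (convex hull (L ` S))"
      by (metis T image_comp convex_hull_translation)
    also have "\<dots> = T ` (convex hull S)"
      by (metis T image_comp convex_hull_linear_image [OF \<open>linear L\<close>])
    finally show ?thesis .
  qed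
  have "vec_Pi (\<lambda>j. {x $ j, x $ j + m $ j}) = T ` vec_Pi (\<lambda>_. {0, 1})"
    unfolding T_def image_vec_Pi [of "\<lambda>j t. m $ j * t + x $ j"] by (simp add: add.commute)
  moreover have "face_box x m = T ` vec_Pi (\<lambda>_. {0..1})"
    unfolding T_def image_vec_Pi [of "\<lambda>j t. m $ j * t + x $ j"] face_box_eq_vec_Pi using assms
    by (simp add: image_affinity_atLeastAtMost) (simp add: add.commute)
  ultimately show ?thesis by (simp add: hull_T convex_hull_unit_cube_vertices)
qed

section \<open>Grids and the doubling map\<close>

definition grid :: "real^'n \<Rightarrow> real \<Rightarrow> (real^'n) set" where
  "grid c A = {x. \<forall>i. \<exists>k::int. x $ i = c $ i + A * of_int k}"

definition doubling :: "real^'n \<Rightarrow> real^'n \<Rightarrow> real^'n \<Rightarrow> real^'n" where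
  "doubling Q v x = 2 *\<^sub>R (x - Q) + Q + v"

lemma int_lattice_eq_grid: "int_lattice A = grid 0 A"
  by (simp add: int_lattice_def grid_def)

lemma doubling_mem_grid_iff:
  assumes "A \<noteq> 0"
  shows "doubling Q v x \<in> grid (2 *\<^sub>R c - Q + v) (2 * A) \<longleftrightarrow> x \<in> grid c A"
proof -
  have "(doubling Q v x) $ i = (2 *\<^sub>R c - Q + v) $ i + 2 * A * of_int k \<longleftrightarrow>
      x $ i = c $ i + A * of_int k" for i k
    by (auto simp: doubling_def algebra_simps)
  then show ?thesis by (simp add: grid_def)
qed

lemma bij_doubling: "bij (doubling Q v)"
proof (rule bij_betw_byWitness[where f' = "\<lambda>y. (1/2) *\<^sub>R (y + Q - v)"])
qed (auto simp: doubling_def vec_eq_iff algebra_simps)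

lemma doubling_image_grid:
  assumes "A \<noteq> 0"
  shows "doubling Q v ` grid c A = grid (2 *\<^sub>R c - Q + v) (2 * A)"
proof (intro set_eqI iffI)
  fix y assume y: "y \<in> grid (2 *\<^sub>R c - Q + v) (2 * A)"
  obtain x where "y = doubling Q v x"
    using bij_doubling by (metis bij_pointE)
  with y show "y \<in> doubling Q v ` grid c A"
    using doubling_mem_grid_iff [OF assms] by blast
qed (use doubling_mem_grid_iff [OF assms] in blast)

lemma scale_succ: "scale lam (t + 1) = 2 * scale lam t"
  by (simp add: scale_def power_int_add_1)

lemma scale_pos: "lam > 0 \<Longrightarrow> scale lam t > 0"
  by (simp add: scale_def)

lemma doubling_sequence_grids:
  fixes G :: "int \<Rightarrow> (real^'n) set"
  assumes "lam > 0" "G 0 = grid c\<^sub>0 lam" "\<And>t. G (t + 1) = doubling (Q t) (v t) ` G t"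
  shows "\<exists>c. G t = grid c (scale lam t)"
proof (induction t rule: int_induct [where k = 0])
  case base
  then show ?case by (auto simp: assms(2) scale_def)
next
  case (step1 i)
  then obtain c where "G i = grid c (scale lam i)" by blast
  then show ?case
    using assms(3) doubling_image_grid scale_pos [OF assms(1)] by (metis scale_succ less_irrefl)
next
  case (step2 i)
  then obtain c where c: "G i = grid c (2 * scale lam (i - 1))"
    using scale_succ [of lam "i - 1"] by auto
  define c' where "c' = (1/2) *\<^sub>R (c + Q (i - 1) - v (i - 1))"
  have "c = 2 *\<^sub>R c' - Q (i - 1) + v (i - 1)"
    by (simp add: c'_def vec_eq_iff algebra_simps)
  then have "doubling (Q (i - 1)) (v (i - 1)) ` G (i - 1)
      = doubling (Q (i - 1)) (v (i - 1)) ` grid c' (scale lam (i - 1))"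
    using assms(3) [of "i - 1"] c doubling_image_grid scale_pos [OF assms(1)]
    by (metis diff_add_cancel less_irrefl)
  then show ?case
    using bij_doubling by (metis bij_is_inj inj_image_eq_iff)
qed

lemma doubling_offset_half:
  assumes "Q \<in> grid c a" "e $ i \<in> {-1, 1}"
  shows "\<exists>p::int. (2 *\<^sub>R c - Q + (a/2) *\<^sub>R e) $ i = c $ i + a * (of_int p + 1/2)"
proof -
  obtain k :: int where k: "Q $ i = c $ i + a * of_int k"
    using assms(1) by (auto simp: grid_def)
  consider "e $ i = -1" | "e $ i = 1" using assms(2) by auto
  then show ?thesis
  proof cases
    case 1
    then have "(2 *\<^sub>R c - Q + (a/2) *\<^sub>R e) $ i = c $ i + a * (of_int (- k - 1) + 1/2)"
      by (simp add: k algebra_simps)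
    then show ?thesis by blast
  next
    case 2
    then have "(2 *\<^sub>R c - Q + (a/2) *\<^sub>R e) $ i = c $ i + a * (of_int (- k) + 1/2)"
      by (simp add: k algebra_simps)
    then show ?thesis by blast
  qed
qed

section \<open>Faces and facets of grid boxes\<close>

lemma face_box_is_face: "x \<in> G \<Longrightarrow> \<forall>j. m $ j \<in> {0, A} \<Longrightarrow> is_face G A (face_box x m)"
  by (auto simp: is_face_def is_kface_def)

lemma entries_nonneg:
  fixes m :: "real^'n"
  assumes "\<forall>i. m $ i \<in> {0, A}" "0 \<le> A"
  shows "\<forall>i. 0 \<le> m $ i"
proof
  fix i show "0 \<le> m $ i" using assms(1) [rule_format, of i] assms(2) by auto
qed

lemma corners_subset_grid:
  assumes "x \<in> grid c A" "\<forall>j. m $ j \<in> {0, A}"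
  shows "vec_Pi (\<lambda>j. {x $ j, x $ j + m $ j}) \<subseteq> grid c A"
proof
  fix z assume z: "z \<in> vec_Pi (\<lambda>j. {x $ j, x $ j + m $ j})"
  have "\<exists>k::int. z $ i = c $ i + A * of_int k" for i
  proof -
    obtain k :: int where k: "x $ i = c $ i + A * of_int k"
      using assms(1) unfolding grid_def by blast
    have "z $ i \<in> {x $ i, x $ i + m $ i}" "m $ i \<in> {0, A}"
      using z assms(2) by (auto simp: vec_Pi_def)
    then have "z $ i = c $ i + A * of_int k \<or> z $ i = c $ i + A * of_int (k + 1)"
      by (auto simp: k algebra_simps)
    then show ?thesis by blast
  qed
  then show "z \<in> grid c A" by (simp add: grid_def)
qed

lemma vertices_face_box:
  assumes "A > 0" "x \<in> grid c A" "\<forall>j. m $ j \<in> {0, A}"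
  shows "vertices (grid c A) (face_box x m) = vec_Pi (\<lambda>j. {x $ j, x $ j + m $ j})"
proof (intro equalityI subsetI)
  fix z assume z: "z \<in> vertices (grid c A) (face_box x m)"
  have "z $ j \<in> {x $ j, x $ j + m $ j}" for j
  proof -
    obtain k :: int where k: "x $ j = c $ j + A * of_int k"
      using assms(2) unfolding grid_def by blast
    obtain l :: int where l: "z $ j = c $ j + A * of_int l"
      using z unfolding vertices_def grid_def by blast
    have le: "x $ j \<le> z $ j" "z $ j \<le> x $ j + m $ j"
      using z by (auto simp: vertices_def face_box_def)
    show ?thesis
    proof (cases "m $ j = 0")
      case True
      then show ?thesis using le by simp
    next
      case False
      then have "m $ j = A" using assms(3) by auto
      then have "A * of_int k \<le> A * of_int l" "A * of_int l \<le> A * of_int (k + 1)"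
        using le by (simp_all add: k l algebra_simps)
      then have "k \<le> l" "l \<le> k + 1"
        using assms(1) by (simp_all add: mult_le_cancel_left_pos)
      then have "l = k \<or> l = k + 1" by auto
      then show ?thesis using k l \<open>m $ j = A\<close> by (auto simp: algebra_simps)
    qed
  qed
  then show "z \<in> vec_Pi (\<lambda>j. {x $ j, x $ j + m $ j})" by (simp add: vec_Pi_def)
next
  fix z assume z: "z \<in> vec_Pi (\<lambda>j. {x $ j, x $ j + m $ j})"
  then have "z \<in> grid c A" using corners_subset_grid [OF assms(2,3)] by blast
  moreover have "z \<in> face_box x m"
    unfolding face_box_def
  proof (intro CollectI allI)
    fix j
    have "z $ j \<in> {x $ j, x $ j + m $ j}" "0 \<le> m $ j"
      using z entries_nonneg [OF assms(3)] assms(1) by (simp_all add: vec_Pi_def)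
    then show "x $ j \<le> z $ j \<and> z $ j \<le> x $ j + m $ j" by auto
  qed
  ultimately show "z \<in> vertices (grid c A) (face_box x m)" by (simp add: vertices_def)
qed

lemma facet_of_face_box:
  fixes x m :: "real^'n"
  assumes A: "A > 0" and m: "\<forall>j. m $ j \<in> {0, A}" and "is_facet G A (face_box x m) F"
  obtains j t where "m $ j = A" "x $ j \<le> t" "t \<le> x $ j + A" "vec_upd x j t \<in> G"
    "F = face_box (vec_upd x j t) (vec_upd m j 0)"
proof -
  obtain k where big: "is_kface G A (Suc k) (face_box x m)" and small: "is_kface G A k F"
    and sub: "F \<subseteq> face_box x m"
    using assms(3) by (auto simp: is_facet_def)
  have m0: "\<forall>j. 0 \<le> m $ j" using entries_nonneg [OF m] A by simp
  obtain x' m' where m': "\<forall>j. m' $ j \<in> {0, A}" "card {j. m' $ j \<noteq> 0} = Suc k"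
    and "face_box x m = face_box x' m'"
    using big by (auto simp: is_kface_def)
  then have card_m: "card {j. m $ j \<noteq> 0} = Suc k"
    using face_box_inject(2) [OF m0] entries_nonneg [OF m'(1)] A by fastforce
  obtain y r where y: "y \<in> G" and r: "\<forall>j. r $ j \<in> {0, A}" and card_r: "card {j. r $ j \<noteq> 0} = k"
    and F: "F = face_box y r"
    using small by (auto simp: is_kface_def)
  have ineq: "x $ i \<le> y $ i" "y $ i + r $ i \<le> x $ i + m $ i" for i
    using sub subset_face_box_iff [of r y x m] entries_nonneg [OF r] A by (auto simp: F)
  have r_le_m: "r $ i \<le> m $ i" for i using ineq [of i] by simp
  have "{i. r $ i \<noteq> 0} \<subseteq> {i. m $ i \<noteq> 0}"
  proof (intro subsetI CollectI)
    fix i assume "i \<in> {i. r $ i \<noteq> 0}"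
    then have "r $ i = A" using r by auto
    then show "m $ i \<noteq> 0" using r_le_m [of i] A by auto
  qed
  then have "card ({i. m $ i \<noteq> 0} - {i. r $ i \<noteq> 0}) = 1"
    by (simp add: card_Diff_subset card_m card_r)
  then obtain j where j: "{i. m $ i \<noteq> 0} - {i. r $ i \<noteq> 0} = {j}"
    by (rule card_1_singletonE)
  then have mj: "m $ j = A" and rj: "r $ j = 0" using m by auto
  have r_eq: "r $ i = m $ i" if "i \<noteq> j" for i
  proof -
    have "m $ i = 0 \<or> r $ i \<noteq> 0" using j that by blast
    moreover have "m $ i \<in> {0, A}" "r $ i \<in> {0, A}" "0 \<le> r $ i"
      using m r entries_nonneg [OF r] A by auto
    ultimately show ?thesis using r_le_m [of i] A by auto
  qed
  have "y $ i = x $ i" if "i \<noteq> j" for i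
    using ineq [of i] r_eq [OF that] by simp
  then have "y = vec_upd x j (y $ j)" "r = vec_upd m j 0"
    using r_eq rj by (auto simp: vec_eq_iff)
  moreover have "x $ j \<le> y $ j" "y $ j \<le> x $ j + A" using ineq [of j] mj rj by auto
  ultimately show ?thesis using that [of j "y $ j"] mj y F by simp
qed

lemma face_box_facet:
  fixes x m :: "real^'n"
  assumes A: "A > 0" and m: "\<forall>i. m $ i \<in> {0, A}" and x: "x \<in> G" and mj: "m $ j = A"
    and "x $ j \<le> t" "t \<le> x $ j + A" and facet_corner: "vec_upd x j t \<in> G"
  shows "is_facet G A (face_box x m) (face_box (vec_upd x j t) (vec_upd m j 0))"
proof -
  define k where "k = card ({i. m $ i \<noteq> 0} - {j})"
  have "j \<in> {i. m $ i \<noteq> 0}" using mj A by simp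
  then have "card {i. m $ i \<noteq> 0} = Suc k"
    unfolding k_def by (metis card_Suc_Diff1 finite)
  then have "is_kface G A (Suc k) (face_box x m)"
    using x m unfolding is_kface_def by blast
  moreover have "{i. vec_upd m j 0 $ i \<noteq> 0} = {i. m $ i \<noteq> 0} - {j}" by auto
  then have "is_kface G A k (face_box (vec_upd x j t) (vec_upd m j 0))"
    using facet_corner m unfolding is_kface_def k_def
    by (intro exI [of _ "vec_upd x j t"] exI [of _ "vec_upd m j 0"]) simp
  moreover have "face_box (vec_upd x j t) (vec_upd m j 0) \<subseteq> face_box x m"
    using assms(4-6) entries_nonneg [OF m] A
    by (subst subset_face_box_iff) (auto simp: less_imp_le)
  ultimately show ?thesis
    unfolding is_facet_def by blast
qed

lemma mem_face_box_vec_upd_nth: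
  "p \<in> face_box (vec_upd x j t) (vec_upd m j 0) \<Longrightarrow> p $ j = t"
  unfolding face_box_def by (drule CollectD, drule spec [of _ j]) simp

lemma disjoint_facets_iff:
  fixes x m :: "real^'n"
  assumes "\<forall>i. 0 \<le> m $ i" "x $ j \<le> t" "t \<le> x $ j + m $ j" "x $ j' \<le> t'" "t' \<le> x $ j' + m $ j'"
  shows "face_box (vec_upd x j t) (vec_upd m j 0) \<inter> face_box (vec_upd x j' t') (vec_upd m j' 0) = {}
    \<longleftrightarrow> j = j' \<and> t \<noteq> t'"
proof
  assume disjoint:
    "face_box (vec_upd x j t) (vec_upd m j 0) \<inter> face_box (vec_upd x j' t') (vec_upd m j' 0) = {}"
  show "j = j' \<and> t \<noteq> t'"
  proof (rule ccontr)
    assume "\<not> (j = j' \<and> t \<noteq> t')"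
    then have "vec_upd (vec_upd x j t) j' t' \<in> face_box (vec_upd x j t) (vec_upd m j 0)"
      "vec_upd (vec_upd x j t) j' t' \<in> face_box (vec_upd x j' t') (vec_upd m j' 0)"
      using assms unfolding face_box_def by auto
    with disjoint show False by blast
  qed
qed (auto dest: mem_face_box_vec_upd_nth)

section \<open>Coarsening a grid\<close>

text \<open>In the application, \<open>grid c a\<close> and \<open>grid b (2 * a)\<close> are the grids of scales \<open>\<alpha>\<^sub>s\<close> and
  \<open>2\<alpha>\<^sub>s\<close>, and \<open>offset_half\<close> is what the choice of \<open>O\<^sub>s\<close> and of the sign vector \<open>\<epsilon>\<^sub>s\<close> guarantees. It makes exactly one
  of \<open>z \<pm> a/2\<close> a coarse coordinate for every fine coordinate \<open>z\<close>, namely \<open>snap j z\<close>.\<close>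

locale grid_coarsening =
  fixes a :: real and c b :: "real^'n"
  assumes a_pos: "a > 0"
    and offset_half: "\<And>i. \<exists>p::int. b $ i = c $ i + a * (of_int p + 1/2)"
begin

definition fine_coords :: "'n \<Rightarrow> real set" where
  "fine_coords j = range (\<lambda>n::int. c $ j + a * of_int n)"

definition coarse_coords :: "'n \<Rightarrow> real set" where
  "coarse_coords j = range (\<lambda>m::int. b $ j + 2 * a * of_int m)"

definition snap :: "'n \<Rightarrow> real \<Rightarrow> real" where
  "snap j z = (if z + a/2 \<in> coarse_coords j then z + a/2 else z - a/2)"

definition Snap :: "real^'n \<Rightarrow> real^'n" where
  "Snap x = (\<chi> j. snap j (x $ j))"

lemma Snap_nth [simp]: "Snap x $ j = snap j (x $ j)"
  by (simp add: Snap_def)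

lemma fine_grid_eq_vec_Pi: "grid c a = vec_Pi fine_coords"
  by (auto simp: grid_def vec_Pi_def fine_coords_def)

lemma coarse_grid_eq_vec_Pi: "grid b (2 * a) = vec_Pi coarse_coords"
  by (auto simp: grid_def vec_Pi_def coarse_coords_def)

lemma fine_coords_nth: "x \<in> grid c a \<Longrightarrow> x $ j \<in> fine_coords j"
  by (simp add: fine_grid_eq_vec_Pi vec_Pi_def)

lemma coarse_coords_nth: "y \<in> grid b (2 * a) \<Longrightarrow> y $ j \<in> coarse_coords j"
  by (simp add: coarse_grid_eq_vec_Pi vec_Pi_def)

lemma add_mult_mem_coarse_iff: "b $ j + a * of_int N \<in> coarse_coords j \<longleftrightarrow> even N"
proof -
  have "b $ j + a * of_int N = b $ j + 2 * a * of_int m \<longleftrightarrow> N = 2 * m" for m :: int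
    using a_pos by auto
  then show ?thesis by (auto simp: coarse_coords_def)
qed

text \<open>The fine coordinates are the points \<open>b\<^sub>j + a (k - 1/2)\<close>; writing \<open>k = 2q + r\<close> with
  \<open>r \<in> {0, 1}\<close>, both values of \<open>r\<close> snap to \<open>b\<^sub>j + 2aq\<close>.\<close>

lemma fine_point_form:
  assumes "z \<in> fine_coords j"
  obtains q :: int and r :: real where "r \<in> {0, 1}" "z = b $ j + a * (2 * of_int q + r - 1/2)"
proof -
  obtain n :: int where n: "z = c $ j + a * of_int n"
    using assms by (auto simp: fine_coords_def)
  obtain p :: int where p: "b $ j = c $ j + a * (of_int p + 1/2)"
    using offset_half by blast
  define q where "q = (n - p) div 2"
  define r where "r = (n - p) mod 2"
  have "n = p + 2 * q + r" by (simp add: q_def r_def)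
  then have "real_of_int n = of_int p + 2 * of_int q + of_int r" by simp
  then have "z = b $ j + a * (2 * of_int q + of_int r - 1/2)"
    unfolding n p by (simp add: algebra_simps)
  moreover have "of_int r \<in> {0, 1::real}"
    by (cases "even (n - p)") (simp_all add: r_def even_iff_mod_2_eq_zero odd_iff_mod_2_eq_one)
  ultimately show ?thesis using that by blast
qed

lemma snap_eq:
  assumes "r \<in> {0, 1}"
  shows "snap j (b $ j + a * (2 * of_int q + r - 1/2)) = b $ j + 2 * a * of_int q"
proof -
  have up: "b $ j + a * (2 * of_int q + r - 1/2) + a/2
      = b $ j + a * of_int (2 * q + (if r = 0 then 0 else 1))"
    using assms by (auto simp: algebra_simps)
  have "even (2 * q + (if r = 0 then 0 else 1)) \<longleftrightarrow> r = 0" by simp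
  then show ?thesis
    using assms unfolding snap_def up add_mult_mem_coarse_iff by (auto simp: algebra_simps)
qed

lemma snap_mem_coarse: "z \<in> fine_coords j \<Longrightarrow> snap j z \<in> coarse_coords j"
  by (elim fine_point_form) (auto simp: snap_eq coarse_coords_def)

lemma abs_diff_snap:
  assumes "z \<in> fine_coords j"
  shows "\<bar>z - snap j z\<bar> = a/2"
proof -
  obtain q :: int and r :: real
    where r: "r \<in> {0, 1}" and z: "z = b $ j + a * (2 * of_int q + r - 1/2)"
    using assms by (rule fine_point_form)
  have "snap j z = b $ j + 2 * a * of_int q"
    unfolding z by (rule snap_eq [OF r])
  then have "z - snap j z = a * (r - 1/2)"
    by (simp add: z algebra_simps)
  then show ?thesis using r a_pos by (auto simp: abs_mult)
qed

lemma snap_unique_nearest: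
  assumes "z \<in> fine_coords j" "w \<in> coarse_coords j" "w \<noteq> snap j z"
  shows "a/2 < \<bar>z - w\<bar>"
proof -
  obtain q :: int and r :: real
    where r: "r \<in> {0, 1}" and z: "z = b $ j + a * (2 * of_int q + r - 1/2)"
    using assms(1) by (rule fine_point_form)
  obtain m :: int where w: "w = b $ j + 2 * a * of_int m"
    using assms(2) by (auto simp: coarse_coords_def)
  have "m \<noteq> q" using assms(3) r by (auto simp: z w snap_eq)
  then have "of_int (q - m) \<ge> (1::real) \<or> of_int (q - m) \<le> (-1::real)" by linarith
  then have "3/2 \<le> \<bar>2 * of_int (q - m) + r - 1/2\<bar>" using r by auto
  moreover have "z - w = a * (2 * of_int (q - m) + r - 1/2)"
    by (simp add: z w algebra_simps)
  ultimately show ?thesis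
    using a_pos by (simp add: abs_mult)
qed

lemma snap_add_step:
  assumes "z \<in> fine_coords j"
  shows "snap j (z + a) = snap j z \<or> snap j (z + a) = snap j z + 2 * a"
proof -
  obtain q :: int and r :: real
    where r: "r \<in> {0, 1}" and z: "z = b $ j + a * (2 * of_int q + r - 1/2)"
    using assms by (rule fine_point_form)
  have snap_z: "snap j z = b $ j + 2 * a * of_int q"
    unfolding z by (rule snap_eq [OF r])
  consider "r = 0" | "r = 1" using r by auto
  then show ?thesis
  proof cases
    case 1
    then have "z + a = b $ j + a * (2 * of_int q + 1 - 1/2)" by (simp add: z algebra_simps)
    then have "snap j (z + a) = snap j z"
      unfolding snap_z by (simp only:) (rule snap_eq, simp)
    then show ?thesis ..
  next
    case 2
    then have "z + a = b $ j + a * (2 * of_int (q + 1) + 0 - 1/2)" by (simp add: z algebra_simps)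
    then have "snap j (z + a) = snap j z + 2 * a"
      unfolding snap_z by (simp only:) (subst snap_eq, simp_all add: algebra_simps)
    then show ?thesis ..
  qed
qed

lemma coarse_coords_consecutive:
  assumes "w \<in> coarse_coords j" "v \<in> coarse_coords j" "w \<le> v" "v \<le> w + 2 * a"
  shows "v = w \<or> v = w + 2 * a"
proof -
  obtain k l :: int where "w = b $ j + 2 * a * of_int k" "v = b $ j + 2 * a * of_int l"
    using assms(1,2) by (auto simp: coarse_coords_def)
  moreover from this
  have "2 * a * of_int k \<le> 2 * a * of_int l" "2 * a * of_int l \<le> 2 * a * of_int (k + 1)"
    using assms(3,4) by (simp_all add: algebra_simps)
  then have "k \<le> l" "l \<le> k + 1"
    using a_pos by (simp_all add: mult_le_cancel_left_pos)
  then have "l = k \<or> l = k + 1" by auto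
  ultimately show ?thesis by (auto simp: algebra_simps)
qed

lemma snap_between:
  assumes "z \<in> fine_coords j" "m \<in> {0, a}" "w \<in> coarse_coords j"
    and "snap j z \<le> w" "w \<le> snap j (z + m)"
  shows "w = snap j z \<or> w = snap j (z + m)"
  using assms snap_add_step [OF assms(1)]
    coarse_coords_consecutive [OF snap_mem_coarse [OF assms(1)] assms(3)]
  by auto

lemma Snap_mem_coarse_grid: "x \<in> grid c a \<Longrightarrow> Snap x \<in> grid b (2 * a)"
  by (simp add: coarse_grid_eq_vec_Pi vec_Pi_def fine_coords_nth snap_mem_coarse)

lemma dist_Snap_less:
  assumes x: "x \<in> grid c a" and y: "y \<in> grid b (2 * a)" and "y \<noteq> Snap x"
  shows "dist x (Snap x) < dist x y"
proof -
  note x_j = fine_coords_nth [OF x] and y_j = coarse_coords_nth [OF y]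
  obtain i where "y $ i \<noteq> Snap x $ i"
    using \<open>y \<noteq> Snap x\<close> by (auto simp: vec_eq_iff)
  have "dist (x $ j) (Snap x $ j) \<le> dist (x $ j) (y $ j)" for j
    using snap_unique_nearest [OF x_j y_j, of j]
    by (cases "y $ j = Snap x $ j") (simp_all add: dist_real_def abs_diff_snap [OF x_j])
  moreover have "dist (x $ i) (Snap x $ i) < dist (x $ i) (y $ i)"
    using snap_unique_nearest [OF x_j y_j] \<open>y $ i \<noteq> Snap x $ i\<close>
    by (simp add: dist_real_def abs_diff_snap [OF x_j])
  ultimately have "(\<Sum>j\<in>UNIV. (dist (x $ j) (Snap x $ j))\<^sup>2) < (\<Sum>j\<in>UNIV. (dist (x $ j) (y $ j))\<^sup>2)"
    by (intro sum_strict_mono_ex1) (auto intro!: power_mono power_strict_mono)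
  then show ?thesis
    by (simp add: dist_vec_def L2_set_def)
qed

lemma gvert_eq_Snap:
  assumes "x \<in> grid c a"
  shows "gvert (grid b (2 * a)) x = Snap x"
  unfolding gvert_def
proof (rule the_equality)
  have "dist x (Snap x) \<le> dist x z" if "z \<in> grid b (2 * a)" for z
    using dist_Snap_less [OF assms that] by (cases "z = Snap x") auto
  then show "Snap x \<in> grid b (2 * a) \<and> x \<in> Vor (grid b (2 * a)) (Snap x)"
    using Snap_mem_coarse_grid [OF assms] by (simp add: Vor_def)
next
  fix y assume "y \<in> grid b (2 * a) \<and> x \<in> Vor (grid b (2 * a)) y"
  then show "y = Snap x"
    using Snap_mem_coarse_grid [OF assms] dist_Snap_less [OF assms]
    by (force simp: Vor_def)
qed

definition Snap_step :: "real^'n \<Rightarrow> real^'n \<Rightarrow> real^'n" where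
  "Snap_step x m = Snap (x + m) - Snap x"

lemma snap_image_corners:
  "snap j ` {x $ j, x $ j + m $ j} = {Snap x $ j, Snap x $ j + Snap_step x m $ j}"
  by (simp add: Snap_step_def)

lemma Snap_step_nth:
  assumes "x \<in> grid c a" "\<forall>i. m $ i \<in> {0, a}"
  shows "Snap_step x m $ j \<in> {0, 2 * a}" and "Snap_step x m $ j \<noteq> 0 \<Longrightarrow> m $ j = a"
proof -
  have "m $ j = 0 \<or> m $ j = a" using assms(2) by auto
  then show "Snap_step x m $ j \<in> {0, 2 * a}" "Snap_step x m $ j \<noteq> 0 \<Longrightarrow> m $ j = a"
    using snap_add_step [OF fine_coords_nth [OF assms(1)], of j] by (auto simp: Snap_step_def)
qed

lemma gvert_image_face_box:
  assumes "x \<in> grid c a" "\<forall>j. m $ j \<in> {0, a}"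
  shows "gvert (grid b (2 * a)) ` vertices (grid c a) (face_box x m)
    = vec_Pi (\<lambda>j. snap j ` {x $ j, x $ j + m $ j})"
proof -
  have "gvert (grid b (2 * a)) ` vertices (grid c a) (face_box x m)
      = Snap ` vec_Pi (\<lambda>j. {x $ j, x $ j + m $ j})"
    unfolding vertices_face_box [OF a_pos assms]
    using corners_subset_grid [OF assms] gvert_eq_Snap by (intro image_cong) auto
  then show ?thesis
    by (simp add: Snap_def image_vec_Pi)
qed

lemma gface_face_box:
  assumes "x \<in> grid c a" "\<forall>j. m $ j \<in> {0, a}" "\<forall>j. 0 \<le> r $ j"
    and "\<forall>j. snap j ` {x $ j, x $ j + m $ j} = {y $ j, y $ j + r $ j}"
  shows "gface (grid c a) (grid b (2 * a)) (face_box x m) = face_box y r"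
  unfolding gface_def gvert_image_face_box [OF assms(1,2)]
  using assms(4) convex_hull_face_box_vertices [OF assms(3)] by simp

lemma image_face:
  assumes "x \<in> grid c a" "\<forall>j. m $ j \<in> {0, a}"
  shows "is_face (grid b (2 * a)) (2 * a) (face_box (Snap x) (Snap_step x m))"
    and "gvert (grid b (2 * a)) ` vertices (grid c a) (face_box x m)
      = vertices (grid b (2 * a)) (face_box (Snap x) (Snap_step x m))"
proof -
  have step: "\<forall>j. Snap_step x m $ j \<in> {0, 2 * a}" using Snap_step_nth(1) [OF assms] by blast
  show "is_face (grid b (2 * a)) (2 * a) (face_box (Snap x) (Snap_step x m))"
    using face_box_is_face Snap_mem_coarse_grid [OF assms(1)] step by blast
  show "gvert (grid b (2 * a)) ` vertices (grid c a) (face_box x m)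
      = vertices (grid b (2 * a)) (face_box (Snap x) (Snap_step x m))"
    unfolding gvert_image_face_box [OF assms] snap_image_corners
    using vertices_face_box [of "2 * a" "Snap x" b "Snap_step x m"] a_pos
      Snap_mem_coarse_grid [OF assms(1)] step by simp
qed

lemma snap_interval_preimage:
  assumes z: "z \<in> fine_coords j" and m: "m \<in> {0, a}"
    and y: "y \<in> coarse_coords j" and r: "r \<in> {0, 2 * a}"
    and "snap j z \<le> y" "y + r \<le> snap j (z + m)"
  obtains t q where "q \<in> {0, a}" "t \<in> {z, z + m}" "t + q \<le> z + m" "snap j ` {t, t + q} = {y, y + r}"
proof (cases "r = 0")
  case True
  then have "y = snap j z \<or> y = snap j (z + m)"
    using snap_between [OF z m y] assms(5,6) by simp
  moreover have "0 \<le> m" using m a_pos by auto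
  ultimately show ?thesis
    using that [of 0 z] that [of 0 "z + m"] True by auto
next
  case False
  then have "r = 2 * a" using r by simp
  then have "m = a" "snap j (z + a) = snap j z + 2 * a" "y = snap j z"
    using snap_add_step [OF z] m a_pos assms(5,6) by auto
  then show ?thesis
    using that [of a z] \<open>r = 2 * a\<close> by auto
qed

lemma subface_preimage:
  assumes x: "x \<in> grid c a" and m: "\<forall>j. m $ j \<in> {0, a}"
    and "is_face (grid b (2 * a)) (2 * a) e" "e \<subseteq> face_box (Snap x) (Snap_step x m)"
  shows "\<exists>f. is_face (grid c a) a f \<and> f \<subseteq> face_box x m \<and> gface (grid c a) (grid b (2 * a)) f = e"
proof -
  obtain y r where y: "y \<in> grid b (2 * a)" and r: "\<forall>j. r $ j \<in> {0, 2 * a}" and e: "e = face_box y r"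
    using assms(3) by (auto simp: is_face_def is_kface_def)
  have r0: "\<forall>j. 0 \<le> r $ j" using entries_nonneg [OF r] a_pos by simp
  have "Snap x $ j \<le> y $ j \<and> y $ j + r $ j \<le> snap j (x $ j + m $ j)" for j
    using assms(4) subset_face_box_iff [OF r0] by (auto simp: e Snap_step_def)
  then have "\<forall>j. \<exists>t q. q \<in> {0, a} \<and> t \<in> {x $ j, x $ j + m $ j} \<and> t + q \<le> x $ j + m $ j \<and>
      snap j ` {t, t + q} = {y $ j, y $ j + r $ j}"
    using snap_interval_preimage [OF fine_coords_nth [OF x] _ coarse_coords_nth [OF y]] m r
    by (metis Snap_nth)
  then obtain t q where tq: "\<forall>j. q j \<in> {0, a} \<and> t j \<in> {x $ j, x $ j + m $ j} \<and>
      t j + q j \<le> x $ j + m $ j \<and> snap j ` {t j, t j + q j} = {y $ j, y $ j + r $ j}"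
    by metis
  define z where "z = (\<chi> j. t j)"
  define q' where "q' = (\<chi> j. q j)"
  have "z \<in> vec_Pi (\<lambda>j. {x $ j, x $ j + m $ j})"
    using tq by (simp add: z_def vec_Pi_def)
  then have z: "z \<in> grid c a"
    using corners_subset_grid [OF x m] by blast
  have q': "\<forall>j. q' $ j \<in> {0, a}" using tq by (simp add: q'_def)
  have "x $ j \<le> z $ j \<and> z $ j + q' $ j \<le> x $ j + m $ j" for j
  proof -
    have "t j \<in> {x $ j, x $ j + m $ j}" "t j + q j \<le> x $ j + m $ j" "0 \<le> m $ j"
      using tq entries_nonneg [OF m] a_pos by auto
    then show ?thesis by (auto simp: z_def q'_def)
  qed
  moreover have "\<forall>i. 0 \<le> q' $ i" using entries_nonneg [OF q'] a_pos by simp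
  ultimately have "face_box z q' \<subseteq> face_box x m"
    using subset_face_box_iff by blast
  moreover have "gface (grid c a) (grid b (2 * a)) (face_box z q') = e"
    unfolding e using gface_face_box [OF z q' r0] tq by (simp add: z_def q'_def)
  ultimately show ?thesis
    using face_box_is_face [OF z q'] by blast
qed

lemma facet_preimage:
  assumes x: "x \<in> grid c a" and m: "\<forall>i. m $ i \<in> {0, a}"
    and "is_facet (grid b (2 * a)) (2 * a) (face_box (Snap x) (Snap_step x m)) e"
  obtains j s where "m $ j = a" "s \<in> {x $ j, x $ j + a}"
    "Snap x $ j \<le> snap j s" "snap j s \<le> Snap x $ j + Snap_step x m $ j"
    "e = face_box (vec_upd (Snap x) j (snap j s)) (vec_upd (Snap_step x m) j 0)"
    "is_facet (grid c a) a (face_box x m) (face_box (vec_upd x j s) (vec_upd m j 0))"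
    "gface (grid c a) (grid b (2 * a)) (face_box (vec_upd x j s) (vec_upd m j 0)) = e"
proof -
  have step: "\<forall>i. Snap_step x m $ i \<in> {0, 2 * a}" using Snap_step_nth(1) [OF x m] by blast
  have step0: "\<forall>i. 0 \<le> Snap_step x m $ i" using entries_nonneg [OF step] a_pos by simp
  obtain j t where stepj: "Snap_step x m $ j = 2 * a" and "Snap x $ j \<le> t" "t \<le> Snap x $ j + 2 * a"
    and corner: "vec_upd (Snap x) j t \<in> grid b (2 * a)"
    and e: "e = face_box (vec_upd (Snap x) j t) (vec_upd (Snap_step x m) j 0)"
    using facet_of_face_box [OF _ step assms(3)] a_pos by auto
  have mj: "m $ j = a" using Snap_step_nth(2) [OF x m] stepj a_pos by simp
  have "t \<in> coarse_coords j" using coarse_coords_nth [OF corner, of j] by simp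
  then have "t = snap j (x $ j) \<or> t = snap j (x $ j + m $ j)"
    using snap_between [OF fine_coords_nth [OF x]] mj \<open>Snap x $ j \<le> t\<close> \<open>t \<le> _\<close> stepj
    by (simp add: Snap_step_def)
  then obtain s where s: "s \<in> {x $ j, x $ j + a}" "snap j s = t" using mj by auto
  have "vec_upd x j s \<in> vec_Pi (\<lambda>i. {x $ i, x $ i + m $ i})"
    using s mj by (simp add: vec_Pi_def)
  then have corner': "vec_upd x j s \<in> grid c a"
    using corners_subset_grid [OF x m] by blast
  have "is_facet (grid c a) a (face_box x m) (face_box (vec_upd x j s) (vec_upd m j 0))"
    using face_box_facet [OF a_pos m x mj _ _ corner'] s a_pos by auto
  moreover have "gface (grid c a) (grid b (2 * a)) (face_box (vec_upd x j s) (vec_upd m j 0)) = e"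
    unfolding e
  proof (rule gface_face_box [OF corner'])
    show "\<forall>i. vec_upd m j 0 $ i \<in> {0, a}" "\<forall>i. 0 \<le> vec_upd (Snap_step x m) j 0 $ i"
      using m step0 by auto
    show "\<forall>i. snap i ` {vec_upd x j s $ i, vec_upd x j s $ i + vec_upd m j 0 $ i}
        = {vec_upd (Snap x) j t $ i, vec_upd (Snap x) j t $ i + vec_upd (Snap_step x m) j 0 $ i}"
      using s snap_image_corners by simp
  qed
  ultimately show ?thesis
    using that mj s stepj \<open>Snap x $ j \<le> t\<close> \<open>t \<le> _\<close> e by simp
qed

lemma opposite_facets_preimage:
  assumes x: "x \<in> grid c a" and m: "\<forall>i. m $ i \<in> {0, a}"
    and facets: "is_facet (grid b (2 * a)) (2 * a) (face_box (Snap x) (Snap_step x m)) e\<^sub>1"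
      "is_facet (grid b (2 * a)) (2 * a) (face_box (Snap x) (Snap_step x m)) e\<^sub>2"
    and disjoint: "e\<^sub>1 \<inter> e\<^sub>2 = {}"
  shows "\<exists>f\<^sub>1 f\<^sub>2. is_facet (grid c a) a (face_box x m) f\<^sub>1 \<and>
    is_facet (grid c a) a (face_box x m) f\<^sub>2 \<and> f\<^sub>1 \<inter> f\<^sub>2 = {} \<and>
    gface (grid c a) (grid b (2 * a)) f\<^sub>1 = e\<^sub>1 \<and> gface (grid c a) (grid b (2 * a)) f\<^sub>2 = e\<^sub>2"
proof -
  have m0: "\<forall>i. 0 \<le> m $ i" using entries_nonneg [OF m] a_pos by simp
  have step0: "\<forall>i. 0 \<le> Snap_step x m $ i"
    using entries_nonneg [of "Snap_step x m" "2 * a"] Snap_step_nth(1) [OF x m] a_pos by simp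
  obtain j\<^sub>1 s\<^sub>1 where 1: "m $ j\<^sub>1 = a" "s\<^sub>1 \<in> {x $ j\<^sub>1, x $ j\<^sub>1 + a}"
    "Snap x $ j\<^sub>1 \<le> snap j\<^sub>1 s\<^sub>1" "snap j\<^sub>1 s\<^sub>1 \<le> Snap x $ j\<^sub>1 + Snap_step x m $ j\<^sub>1"
    "e\<^sub>1 = face_box (vec_upd (Snap x) j\<^sub>1 (snap j\<^sub>1 s\<^sub>1)) (vec_upd (Snap_step x m) j\<^sub>1 0)"
    "is_facet (grid c a) a (face_box x m) (face_box (vec_upd x j\<^sub>1 s\<^sub>1) (vec_upd m j\<^sub>1 0))"
    "gface (grid c a) (grid b (2 * a)) (face_box (vec_upd x j\<^sub>1 s\<^sub>1) (vec_upd m j\<^sub>1 0)) = e\<^sub>1"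
    using facet_preimage [OF x m facets(1)] by blast
  obtain j\<^sub>2 s\<^sub>2 where 2: "m $ j\<^sub>2 = a" "s\<^sub>2 \<in> {x $ j\<^sub>2, x $ j\<^sub>2 + a}"
    "Snap x $ j\<^sub>2 \<le> snap j\<^sub>2 s\<^sub>2" "snap j\<^sub>2 s\<^sub>2 \<le> Snap x $ j\<^sub>2 + Snap_step x m $ j\<^sub>2"
    "e\<^sub>2 = face_box (vec_upd (Snap x) j\<^sub>2 (snap j\<^sub>2 s\<^sub>2)) (vec_upd (Snap_step x m) j\<^sub>2 0)"
    "is_facet (grid c a) a (face_box x m) (face_box (vec_upd x j\<^sub>2 s\<^sub>2) (vec_upd m j\<^sub>2 0))"
    "gface (grid c a) (grid b (2 * a)) (face_box (vec_upd x j\<^sub>2 s\<^sub>2) (vec_upd m j\<^sub>2 0)) = e\<^sub>2"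
    using facet_preimage [OF x m facets(2)] by blast
  have "j\<^sub>1 = j\<^sub>2 \<and> snap j\<^sub>1 s\<^sub>1 \<noteq> snap j\<^sub>2 s\<^sub>2"
    using disjoint unfolding 1(5) 2(5) disjoint_facets_iff [OF step0 1(3,4) 2(3,4)] .
  moreover have "x $ j\<^sub>1 \<le> s\<^sub>1" "s\<^sub>1 \<le> x $ j\<^sub>1 + m $ j\<^sub>1" "x $ j\<^sub>2 \<le> s\<^sub>2" "s\<^sub>2 \<le> x $ j\<^sub>2 + m $ j\<^sub>2"
    using 1(1,2) 2(1,2) a_pos by auto
  ultimately have "face_box (vec_upd x j\<^sub>1 s\<^sub>1) (vec_upd m j\<^sub>1 0)
      \<inter> face_box (vec_upd x j\<^sub>2 s\<^sub>2) (vec_upd m j\<^sub>2 0) = {}"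
    using disjoint_facets_iff [OF m0] by auto
  then show ?thesis using 1(6,7) 2(6,7) by blast
qed

end

theorem lemma4:
  fixes lam :: real
    and G :: "int \<Rightarrow> (real^'n) set"
    and Ot :: "int \<Rightarrow> real^'n"
    and eps :: "int \<Rightarrow> real^'n"
    and s :: int and k :: nat and f :: "(real^'n) set"
  assumes lam_pos: "lam > 0"
    and G0: "G 0 = int_lattice lam"
    and O_mem: "\<forall>t. Ot t \<in> G t"
    and eps_sign: "\<forall>t j. eps t $ j \<in> {-1, 1}"
    and G_step: "\<forall>t. G (t + 1) =
        (\<lambda>x. 2 *\<^sub>R (x - Ot t) + Ot t + (scale lam t / 2) *\<^sub>R eps t) ` G t"
    and f_face: "is_kface (G s) (scale lam s) k f"
  shows "\<exists>e. is_face (G (s + 1)) (scale lam (s + 1)) e \<and>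
           gvert (G (s + 1)) ` vertices (G s) f = vertices (G (s + 1)) e \<and>
           (\<forall>e1. is_face (G (s + 1)) (scale lam (s + 1)) e1 \<and> e1 \<subseteq> e \<longrightarrow>
              (\<exists>f1. is_face (G s) (scale lam s) f1 \<and> f1 \<subseteq> f \<and>
                     gface (G s) (G (s + 1)) f1 = e1)) \<and>
           (\<forall>e1 e2. is_facet (G (s + 1)) (scale lam (s + 1)) e e1 \<and>
                    is_facet (G (s + 1)) (scale lam (s + 1)) e e2 \<and> e1 \<inter> e2 = {} \<longrightarrow>
              (\<exists>f1 f2. is_facet (G s) (scale lam s) f f1 \<and> is_facet (G s) (scale lam s) f f2 \<and>
                       f1 \<inter> f2 = {} \<and>
                       gface (G s) (G (s + 1)) f1 = e1 \<and> gface (G s) (G (s + 1)) f2 = e2))"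
proof -
  define a where "a = scale lam s"
  have a_pos: "a > 0" using scale_pos [OF lam_pos] by (simp add: a_def)
  have doubling_step: "G (t + 1) = doubling (Ot t) ((scale lam t / 2) *\<^sub>R eps t) ` G t" for t
    using G_step by (simp add: doubling_def [abs_def])
  obtain c where Gs: "G s = grid c a"
    using doubling_sequence_grids [OF lam_pos G0 [unfolded int_lattice_eq_grid] doubling_step] a_def
    by blast
  define b where "b = 2 *\<^sub>R c - Ot s + (a/2) *\<^sub>R eps s"
  have Gs1: "G (s + 1) = grid b (2 * a)"
    using doubling_step [of s] doubling_image_grid [of a] a_pos by (simp add: Gs a_def b_def)
  have "Ot s \<in> grid c a" using O_mem Gs by auto
  then interpret grid_coarsening a c b
    using a_pos doubling_offset_half eps_sign unfolding b_def by unfold_locales blast+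
  obtain x m where x: "x \<in> grid c a" and m: "\<forall>j. m $ j \<in> {0, a}" and f: "f = face_box x m"
    using f_face by (auto simp: Gs a_def is_kface_def)
  show ?thesis
    unfolding Gs Gs1 scale_succ a_def [symmetric] f
    using image_face [OF x m] subface_preimage [OF x m] opposite_facets_preimage [OF x m] by blast
qed

end
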